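(* Let $\Omega\subseteq\mathbb{R}^2$ be a compact Borel set, $\rho\in\mathbb{N}$, and for each $i\in\{1,\dots,\rho\}$ let $P_i$ be a dimensional facility with root point $p_i$. Let $\Omega_i=\{q\in\mathbb{R}^2:P_i^q\subseteq\Omega\}$ and $$\Gamma=\{(q_1,\dots,q_\rho)\in\Omega_1\times\dots\times\Omega_\rho:\ \operatorname{int}(P_i^{q_i})\cap\operatorname{int}(P_j^{q_j})=\emptyset\ \text{for all } i,j\in\{1,\dots,\rho\},\ i\neq j\}.$$ Then $\Gamma$ is a compact subset of $\mathbb{R}^{2\rho}$.
   Context: A dimensional facility is a compact set $P\subseteq\mathbb{R}^2$ that is the closure of a nonempty open connected set; each $P_i$ has a distinguished root point $p_i\in P_i$, and for $q\in\mathbb{R}^2$, $P_i^{q}:=P_i+(q-p_i)$ denotes the translate of $P_i$ whose root point is at $q$. *)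

theory Defs
  imports "HOL-Analysis.Analysis"
begin

definition dimensional_facility :: "(real^2) set \<Rightarrow> bool" where
  "dimensional_facility P \<longleftrightarrow> compact P \<and>
     (\<exists>U. open U \<and> connected U \<and> U \<noteq> {} \<and> P = closure U)"

text \<open>Translate of facility P with root point p so that the root lies at q.\<close>
definition placed :: "(real^2) set \<Rightarrow> real^2 \<Rightarrow> real^2 \<Rightarrow> (real^2) set" where
  "placed P p q = (\<lambda>x. x + (q - p)) ` P"

end

theory Submission
  imports Defs
begin

text \<open>Every constraint defining the set of feasible placements is either the preimage of the
closed set \<open>\<Omega>\<close> under a translation, or the negation of an open condition (two translated
interiors sharing a point), so the set is closed. It is bounded because the root point of
each placed facility lies in \<open>\<Omega>\<close>.\<close>

lemma mem_placed: "x \<in> placed P p q \<longleftrightarrow> x - (q - p) \<in> P"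
  unfolding placed_def by (auto intro: image_eqI[where x = "x - (q - p)"])

lemma interior_placed: "interior (placed P p q) = placed (interior P) p q"
proof -
  have "placed S p q = (+) (q - p) ` S" for S
    unfolding placed_def by (auto simp: add.commute)
  then show ?thesis by (simp add: interior_translation)
qed

lemma closed_placed_subset:
  assumes "closed \<Omega>"
  shows "closed {q. placed P p q \<subseteq> \<Omega>}"
proof -
  have "{q. placed P p q \<subseteq> \<Omega>} = (\<Inter>x\<in>P. (\<lambda>q. x + (q - p)) -` \<Omega>)"
    unfolding placed_def by auto
  moreover have "closed ((\<lambda>q. x + (q - p)) -` \<Omega>)" for x
    by (intro closed_vimage assms continuous_intros)
  ultimately show ?thesis by auto
qed

lemma open_placed_interiors_meet:
  "open {(u, v). interior (placed P p u) \<inter> interior (placed Q r v) \<noteq> {}}"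
proof -
  have "{(u, v). interior (placed P p u) \<inter> interior (placed Q r v) \<noteq> {}} =
        (\<Union>x. (\<lambda>(u, v). (x - (u - p), x - (v - r))) -` (interior P \<times> interior Q))"
    unfolding interior_placed by (auto simp: mem_placed)
  moreover have "open ((\<lambda>(u, v). (x - (u - p), x - (v - r))) -` (interior P \<times> interior Q))"
    for x :: "real^2"
    by (intro open_vimage open_Times open_interior) (auto simp: case_prod_unfold intro!: continuous_intros)
  ultimately show ?thesis by auto
qed

lemma bounded_vec_nth_in:
  assumes "bounded (S :: 'a::real_normed_vector set)"
  shows "bounded {q :: 'a^'n. \<forall>i. q $ i \<in> S}"
proof -
  obtain B where B: "\<And>x. x \<in> S \<Longrightarrow> norm x \<le> B"
    using assms bounded_iff by blast
  have "norm q \<le> real CARD('n) * B" if "\<forall>i. q $ i \<in> S" for q :: "'a^'n"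
  proof -
    have "norm q \<le> (\<Sum>i\<in>UNIV. norm (q $ i))"
      unfolding norm_vec_def by (rule L2_set_le_sum) auto
    also have "\<dots> \<le> (\<Sum>i\<in>(UNIV::'n set). B)"
      by (rule sum_mono) (use that B in auto)
    finally show ?thesis by simp
  qed
  then show ?thesis unfolding bounded_iff by blast
qed

theorem lemma2:
  fixes \<Omega> :: "(real^2) set"
    and P :: "'n::finite \<Rightarrow> (real^2) set"
    and p :: "'n \<Rightarrow> real^2"
  assumes "compact \<Omega>" and "\<Omega> \<in> sets borel"
    and "\<And>i. dimensional_facility (P i)"
    and "\<And>i. p i \<in> P i"
  shows "compact {q :: (real^2)^'n.
            (\<forall>i. placed (P i) (p i) (q $ i) \<subseteq> \<Omega>) \<and>
            (\<forall>i j. i \<noteq> j \<longrightarrow>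
               interior (placed (P i) (p i) (q $ i)) \<inter> interior (placed (P j) (p j) (q $ j)) = {})}"
    (is "compact ?S")
proof -
  define A where "A i = {v. placed (P i) (p i) v \<subseteq> \<Omega>}" for i
  define M where "M i j = {(u, v). interior (placed (P i) (p i) u) \<inter> interior (placed (P j) (p j) v) \<noteq> {}}" for i j
  have S_eq: "?S = {q. \<forall>i. q $ i \<in> A i} \<inter> {q. \<forall>i j. i \<noteq> j \<longrightarrow> (q $ i, q $ j) \<notin> M i j}"
    unfolding A_def M_def by auto
  have "closed {q :: (real^2)^'n. q $ i \<in> A i}" for i
    using closed_placed_subset[OF compact_imp_closed[OF assms(1)]]
    by (intro closed_vimage[unfolded vimage_def]) (auto simp: A_def intro: continuous_intros)
  moreover have "open {q :: (real^2)^'n. (q $ i, q $ j) \<in> M i j}" for i j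
    using open_placed_interiors_meet
    by (intro open_vimage[unfolded vimage_def]) (auto simp: M_def intro!: continuous_intros)
  ultimately have "closed ?S"
    unfolding S_eq by (intro closed_Int closed_Collect_all closed_Collect_imp closed_Collect_neg) auto
  moreover have "?S \<subseteq> {q. \<forall>i. q $ i \<in> \<Omega>}"
  proof safe
    fix q :: "(real^2)^'n" and i
    assume "\<forall>i. placed (P i) (p i) (q $ i) \<subseteq> \<Omega>"
    moreover have "q $ i \<in> placed (P i) (p i) (q $ i)"
      using assms(4) by (simp add: mem_placed)
    ultimately show "q $ i \<in> \<Omega>" by blast
  qed
  then have "bounded ?S"
    using bounded_subset bounded_vec_nth_in compact_imp_bounded[OF assms(1)] by blast
  ultimately show ?thesis by (simp add: compact_eq_bounded_closed)
qed

end
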